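(* Let $n\ge 2$ and $m\ge 1$ be integers and let $X$ be an $n\times m$ Latin hypercube design. Then $$d_1(X)\le \left\lfloor \frac{(n+1)m}{3}\right\rfloor,\qquad d_2(X)\le \sqrt{\left\lfloor \frac{n(n+1)m}{6}\right\rfloor }.$$
   Context: An $n\times m$ Latin hypercube design (LHD) is an $n\times m$ matrix each of whose columns is a permutation of $\{1,\ldots,n\}$. For rows $x_i=(x_{i1},\dots,x_{im})$ and $x_j$ and a positive integer $q$, $d_q(x_i,x_j)=\{\sum_{k=1}^m|x_{ik}-x_{jk}|^q\}^{1/q}$, and $d_q(X)=\min\{d_q(x_i,x_j):1\le i<j\le n\}$. *)

theory Defs
  imports Complex_Main
begin

text \<open>An n x m design is represented as X :: nat => nat => nat, where X i k is the
entry in row i (0 <= i < n) and column k (0 <= k < m).\<close>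

definition is_LHD :: "nat \<Rightarrow> nat \<Rightarrow> (nat \<Rightarrow> nat \<Rightarrow> nat) \<Rightarrow> bool" where
  "is_LHD n m X \<longleftrightarrow> (\<forall>k<m. bij_betw (\<lambda>i. X i k) {0..<n} {1..n})"

definition dq_rows :: "nat \<Rightarrow> nat \<Rightarrow> (nat \<Rightarrow> nat \<Rightarrow> nat) \<Rightarrow> nat \<Rightarrow> nat \<Rightarrow> real" where
  "dq_rows q m X i j =
     root q (\<Sum>k<m. \<bar>real (X i k) - real (X j k)\<bar> ^ q)"

definition dq :: "nat \<Rightarrow> nat \<Rightarrow> nat \<Rightarrow> (nat \<Rightarrow> nat \<Rightarrow> nat) \<Rightarrow> real" where
  "dq q n m X = Min {dq_rows q m X i j | i j. i < j \<and> j < n}"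

end

theory Submission
  imports Defs
begin

text \<open>Summing \<open>d\<^sub>q(x\<^sub>i, x\<^sub>j)\<^sup>q\<close> over all ordered pairs of rows splits column by
  column, and since every column is a permutation of \<open>{1..n}\<close>, each column contributes the same
  amount \<open>S\<^sub>q(n)\<close>, the sum of \<open>|a - b|\<^sup>q\<close> over \<open>a, b \<in> {1..n}\<close>, whatever the design.
  Hence some pair of distinct rows has \<open>d\<^sub>q\<^sup>q\<close> at most the average \<open>m S\<^sub>q(n) / (n(n-1))\<close>,
  and, \<open>d\<^sub>q\<^sup>q\<close> being an integer, at most its floor. As \<open>3 S\<^sub>1(n) = (n-1)n(n+1)\<close> and
  \<open>6 S\<^sub>2(n) = n\<^sup>2(n\<^sup>2-1)\<close>, the two averages are \<open>(n+1)m/3\<close> and \<open>n(n+1)m/6\<close>.\<close>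

lemma ex_pair_le_average:
  fixes f :: "nat \<Rightarrow> nat \<Rightarrow> 'a::linordered_idom"
  assumes sym: "\<And>i j. f i j = f j i" and diag: "\<And>i. f i i = 0" and "n \<ge> 2"
  shows "\<exists>i j. i < j \<and> j < n \<and> of_nat (n * (n - 1)) * f i j \<le> (\<Sum>i<n. \<Sum>j<n. f i j)"
proof (rule ccontr)
  define S where "S = (\<Sum>i<n. \<Sum>j<n. f i j)"
  assume none: "\<not> ?thesis"
  have above: "S < of_nat (n * (n - 1)) * f i j" if "i < n" "j < n" "i \<noteq> j" for i j
  proof (cases "i < j")
    case True
    with none that show ?thesis by (auto simp: S_def not_le)
  next
    case False
    with none that show ?thesis by (auto simp: S_def not_le sym[of i j])
  qed
  have row: "of_nat (n - 1) * S < of_nat (n * (n - 1)) * (\<Sum>j<n. f i j)" if "i < n" for i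
  proof -
    have "(if i = 0 then 1 else 0) \<in> {..<n} - {i}"
      using \<open>n \<ge> 2\<close> by auto
    then have others: "{..<n} - {i} \<noteq> {}"
      by blast
    have "of_nat (n - 1) * S = (\<Sum>j\<in>{..<n} - {i}. S)"
      using that by simp
    also have "\<dots> < (\<Sum>j\<in>{..<n} - {i}. of_nat (n * (n - 1)) * f i j)"
      using that others by (intro sum_strict_mono above) auto
    also have "\<dots> = of_nat (n * (n - 1)) * (\<Sum>j<n. f i j)"
      using that by (simp add: sum_distrib_left sum_diff1 diag)
    finally show ?thesis .
  qed
  have "of_nat n * (of_nat (n - 1) * S) = (\<Sum>i<n. of_nat (n - 1) * S)"
    by (simp only: sum_constant card_lessThan)
  also have "\<dots> < (\<Sum>i<n. of_nat (n * (n - 1)) * (\<Sum>j<n. f i j))"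
    using \<open>n \<ge> 2\<close> by (intro sum_strict_mono row) (auto simp: lessThan_empty_iff)
  also have "\<dots> = of_nat (n * (n - 1)) * S"
    by (simp add: S_def sum_distrib_left)
  finally show False
    by (simp add: mult.assoc)
qed

definition abs_diff_pow_sum :: "nat \<Rightarrow> nat \<Rightarrow> int" where
  "abs_diff_pow_sum q n = (\<Sum>a\<in>{1..n}. \<Sum>b\<in>{1..n}. \<bar>int a - int b\<bar> ^ q)"

lemma abs_diff_pow_sum_Suc:
  assumes "q > 0"
  shows "abs_diff_pow_sum q (Suc n) = abs_diff_pow_sum q n + 2 * (\<Sum>a\<in>{1..n}. (int n + 1 - int a) ^ q)"
proof -
  have ivl: "{1..Suc n} = insert (Suc n) {1..n}" by auto
  have "(\<Sum>a\<in>{1..n}. \<bar>int a - int (Suc n)\<bar> ^ q) = (\<Sum>a\<in>{1..n}. (int n + 1 - int a) ^ q)"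
   and "(\<Sum>a\<in>{1..n}. \<bar>int (Suc n) - int a\<bar> ^ q) = (\<Sum>a\<in>{1..n}. (int n + 1 - int a) ^ q)"
    by (auto intro!: sum.cong simp: abs_minus_commute add.commute)
  then show ?thesis
    using assms by (simp add: abs_diff_pow_sum_def ivl sum.distrib)
qed

lemma six_times_sum_squares_int: "6 * (\<Sum>a\<in>{1..n}. int a ^ 2) = int n * (int n + 1) * (2 * int n + 1)"
  by (induction n) (auto simp: algebra_simps power2_eq_square)

lemma abs_diff_pow_sum_1: "3 * abs_diff_pow_sum 1 n = (int n - 1) * int n * (int n + 1)"
proof (induction n)
  case 0
  then show ?case by (simp add: abs_diff_pow_sum_def)
next
  case (Suc n)
  have "(\<Sum>a\<in>{1..n}. (int n + 1 - int a) ^ 1) = int n * (int n + 1) - (\<Sum>a\<in>{1..n}. int a)"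
    by (simp add: sum_subtractf)
  with double_gauss_sum_from_Suc_0[of n, where 'a=int] have "2 * (\<Sum>a\<in>{1..n}. (int n + 1 - int a) ^ 1) = int n * (int n + 1)"
    by (simp add: algebra_simps)
  with Suc show ?case
    by (simp add: abs_diff_pow_sum_Suc algebra_simps)
qed

lemma abs_diff_pow_sum_2: "6 * abs_diff_pow_sum 2 n = int n * int n * (int n * int n - 1)"
proof (induction n)
  case 0
  then show ?case by (simp add: abs_diff_pow_sum_def)
next
  case (Suc n)
  define c where "c = int n + 1"
  have "(\<Sum>a\<in>{1..n}. (c - int a) ^ 2) = (\<Sum>a\<in>{1..n}. c\<^sup>2 - 2 * c * int a + int a ^ 2)"
    by (simp add: power2_diff algebra_simps)
  also have "\<dots> = int n * c\<^sup>2 - 2 * c * (\<Sum>a\<in>{1..n}. int a) + (\<Sum>a\<in>{1..n}. int a ^ 2)"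
    by (simp add: sum.distrib sum_subtractf sum_distrib_left)
  finally have "6 * (\<Sum>a\<in>{1..n}. (c - int a) ^ 2)
      = 6 * int n * c\<^sup>2 - 6 * c * (int n * (int n + 1)) + int n * (int n + 1) * (2 * int n + 1)"
    using double_gauss_sum_from_Suc_0[of n, where 'a=int] six_times_sum_squares_int[of n] by (simp add: algebra_simps)
  with Suc show ?case
    by (simp add: abs_diff_pow_sum_Suc c_def algebra_simps power2_eq_square)
qed

definition row_dist_pow :: "nat \<Rightarrow> nat \<Rightarrow> (nat \<Rightarrow> nat \<Rightarrow> nat) \<Rightarrow> nat \<Rightarrow> nat \<Rightarrow> int" where
  "row_dist_pow q m X i j = (\<Sum>k<m. \<bar>int (X i k) - int (X j k)\<bar> ^ q)"

lemma dq_rows_eq_root_row_dist_pow: "dq_rows q m X i j = root q (of_int (row_dist_pow q m X i j))"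
  by (simp add: dq_rows_def row_dist_pow_def)

lemma sum_row_dist_pow_LHD:
  assumes "is_LHD n m X"
  shows "(\<Sum>i<n. \<Sum>j<n. row_dist_pow q m X i j) = int m * abs_diff_pow_sum q n"
proof -
  have column: "(\<Sum>i<n. \<Sum>j<n. \<bar>int (X i k) - int (X j k)\<bar> ^ q) = abs_diff_pow_sum q n"
    if "k < m" for k
  proof -
    have perm: "bij_betw (\<lambda>i. X i k) {..<n} {1..n}"
      using assms that by (simp add: is_LHD_def atLeast0LessThan)
    show ?thesis
      unfolding abs_diff_pow_sum_def
      using sum.reindex_bij_betw[OF perm, of "\<lambda>a. \<Sum>b\<in>{1..n}. \<bar>int a - int b\<bar> ^ q"]
            sum.reindex_bij_betw[OF perm, of "\<lambda>b. \<bar>int (X _ k) - int b\<bar> ^ q"]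
      by simp
  qed
  have "(\<Sum>i<n. \<Sum>j<n. row_dist_pow q m X i j) = (\<Sum>k<m. \<Sum>i<n. \<Sum>j<n. \<bar>int (X i k) - int (X j k)\<bar> ^ q)"
    unfolding row_dist_pow_def by (simp add: sum.swap[where B="{..<m}"])
  also have "\<dots> = int m * abs_diff_pow_sum q n"
    by (simp add: column)
  finally show ?thesis .
qed

lemma dq_le_dq_rows:
  assumes "i < j" "j < n"
  shows "dq q n m X \<le> dq_rows q m X i j"
proof -
  have "{dq_rows q m X i j | i j. i < j \<and> j < n} \<subseteq> (\<lambda>(i, j). dq_rows q m X i j) ` ({..<n} \<times> {..<n})"
    by auto
  then have "finite {dq_rows q m X i j | i j. i < j \<and> j < n}"
    by (rule finite_subset) auto
  then show ?thesis
    unfolding dq_def by (rule Min_le) (use assms in auto)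
qed

lemma dq_le_root_floor_average:
  assumes "is_LHD n m X" "q > 0" "n \<ge> 2"
  shows "dq q n m X \<le> root q \<lfloor>real m * abs_diff_pow_sum q n / real (n * (n - 1))\<rfloor>"
proof -
  have "\<exists>i j. i < j \<and> j < n \<and> of_nat (n * (n - 1)) * row_dist_pow q m X i j
          \<le> (\<Sum>i<n. \<Sum>j<n. row_dist_pow q m X i j)"
    using \<open>q > 0\<close> \<open>n \<ge> 2\<close>
    by (intro ex_pair_le_average) (auto simp: row_dist_pow_def abs_minus_commute)
  then obtain i j where ij: "i < j" "j < n"
    and "of_nat (n * (n - 1)) * row_dist_pow q m X i j \<le> int m * abs_diff_pow_sum q n"
    unfolding sum_row_dist_pow_LHD[OF assms(1)] by blast
  then have "real (n * (n - 1)) * row_dist_pow q m X i j \<le> real m * abs_diff_pow_sum q n"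
    by (metis of_int_le_iff of_int_mult of_int_of_nat_eq)
  then have "row_dist_pow q m X i j \<le> real m * abs_diff_pow_sum q n / real (n * (n - 1))"
    using \<open>n \<ge> 2\<close> by (simp add: pos_le_divide_eq mult.commute)
  then have "row_dist_pow q m X i j \<le> \<lfloor>real m * abs_diff_pow_sum q n / real (n * (n - 1))\<rfloor>"
    by (simp add: le_floor_iff)
  then have "root q (row_dist_pow q m X i j) \<le> root q \<lfloor>real m * abs_diff_pow_sum q n / real (n * (n - 1))\<rfloor>"
    using \<open>q > 0\<close> by simp
  moreover have "dq q n m X \<le> root q (row_dist_pow q m X i j)"
    using dq_le_dq_rows[OF ij] by (simp add: dq_rows_eq_root_row_dist_pow)
  ultimately show ?thesis
    by linarith
qed

theorem lemma1:
  fixes n m :: nat and X :: "nat \<Rightarrow> nat \<Rightarrow> nat"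
  assumes "n \<ge> 2" and "m \<ge> 1" and "is_LHD n m X"
  shows "dq 1 n m X \<le> real (((n + 1) * m) div 3)
       \<and> dq 2 n m X \<le> sqrt (real ((n * (n + 1) * m) div 6))"
proof -
  have S1: "real_of_int (abs_diff_pow_sum 1 n) = (real n - 1) * real n * (real n + 1) / 3"
   and S2: "real_of_int (abs_diff_pow_sum 2 n) = real n * real n * (real n * real n - 1) / 6"
    using arg_cong[OF abs_diff_pow_sum_1[of n], of real_of_int]
      arg_cong[OF abs_diff_pow_sum_2[of n], of real_of_int] by simp_all
  have pairs: "real (n * (n - 1)) = real n * (real n - 1)" and "real n - 1 \<noteq> 0"
    using \<open>n \<ge> 2\<close> by simp_all
  then have avg1: "real m * abs_diff_pow_sum 1 n / real (n * (n - 1)) = real ((n + 1) * m) / 3"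
    and avg2: "real m * abs_diff_pow_sum 2 n / real (n * (n - 1)) = real (n * (n + 1) * m) / 6"
    unfolding S1 S2 pairs using \<open>n \<ge> 2\<close> by (simp_all add: field_simps)
  have "dq 1 n m X \<le> root 1 \<lfloor>real m * abs_diff_pow_sum 1 n / real (n * (n - 1))\<rfloor>"
   and "dq 2 n m X \<le> root 2 \<lfloor>real m * abs_diff_pow_sum 2 n / real (n * (n - 1))\<rfloor>"
    by (rule dq_le_root_floor_average[OF assms(3) _ assms(1)]; simp)+
  then show ?thesis
    unfolding avg1 avg2 floor_divide_of_nat_eq[of _ 3, simplified] floor_divide_of_nat_eq[of _ 6, simplified]
    by (simp add: sqrt_def)
qed

end
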